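(* In the setting below, suppose the tight disturbance bound assumption and the persistent excitation assumption hold, and let $\Theta_t$ be the fixed-complexity parameter set with periodic update. Then for every $\epsilon>0$, every $\theta\in\Theta_0$ such that $[M_\Theta]_i(\theta-\theta^\ast)\ge\epsilon$ for some $i\in\{1,\dots,r\}$, and every $t\in\mathbb{N}_{\ge0}$, $$\Pr\{\theta\in\Theta_t\}\ \le\ \Bigl\{1-\Bigl[p_w\Bigl(\frac{\epsilon\beta}{N_u\tau}\Bigr)\Bigr]^{N_u}\Bigr\}^{\lfloor t/N_u\rfloor}.$$
   Context: Setting: $\theta^\ast\in\mathbb{R}^p$ is a fixed (unknown) parameter vector. $\mathcal{W}=\{w\in\mathbb{R}^{n_x}:\Pi_w w\le\pi_w\}$ is a compact convex polytope with $\pi_w>0$. The disturbances $w_0,w_1,\dots$ are independent random vectors with $w_t\in\mathcal{W}$ for all $t$. $D_0,D_1,\dots\in\mathbb{R}^{n_x\times p}$ is a given (non-random) sequence of regressor matrices. For $t\ge1$ the (random) unfalsified parameter set is $\Delta_t=\{\theta\in\mathbb{R}^p: D_{t-1}(\theta^\ast-\theta)+w_{t-1}\in\mathcal{W}\}$. $\|\cdot\|$ is the Euclidean norm (induced 2-norm for matrices); $\partial\mathcal{W}$ is the boundary of $\mathcal{W}$; $[M]_i$ is the $i$th row of $M$. Tight disturbance bound assumption: there is a function $p_w:(0,\infty)\to(0,1]$ such that for all $w^0\in\partial\mathcal{W}$, all $\epsilon>0$ and all $t\ge0$, $\Pr\{\|w_t-w^0\|<\epsilon\}\ge p_w(\epsilon)$.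 Persistent excitation assumption: there exist $\tau>0$, $\beta>0$ and an integer $N_u\ge\lceil p/n_x\rceil$ such that for every $t\ge0$, $\|D_t\|\le\tau$ and $\sum_{j=t}^{t+N_u-1}D_j^\top D_j\succeq\beta I$. Fixed-complexity parameter set with periodic update: $M_\Theta\in\mathbb{R}^{r\times p}$ has rows of unit Euclidean norm and is such that $\Theta(\mu):=\{\theta:M_\Theta\theta\le\mu\}$ is bounded for every $\mu\in\mathbb{R}^r$; $\Theta_0=\Theta(\mu_0)$ contains $\theta^\ast$. For $t\ge1$: if $t=kN_u$ for some integer $k\ge1$, then $\Theta_t=\Theta(\mu_t)$ with $[\mu_t]_i=\max\{[M_\Theta]_i\theta:\theta\in\Theta_{t-N_u}\cap\bigcap_{j=t-N_u+1}^t\Delta_j\}$ for $i=1,\dots,r$ (the smallest set of the form $\Theta(\mu)$ containing that intersection); otherwise $\Theta_t=\Theta_{t-1}$. *)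

theory Defs
  imports "HOL-Probability.Probability"
begin

definition polyset :: "real^'n^'m \<Rightarrow> real^'m \<Rightarrow> (real^'n) set" where
  "polyset A b = {x. \<forall>i. A $ i \<bullet> x \<le> b $ i}"

definition unfalsified ::
  "(nat \<Rightarrow> real^'p^'nx) \<Rightarrow> (nat \<Rightarrow> 'a \<Rightarrow> real^'nx) \<Rightarrow> real^'p \<Rightarrow>
   real^'nx^'m \<Rightarrow> real^'m \<Rightarrow> nat \<Rightarrow> 'a \<Rightarrow> (real^'p) set" where
  "unfalsified D w thstar Piw piw t om =
     {th. D (t - 1) *v (thstar - th) + w (t - 1) om \<in> polyset Piw piw}"

text \<open>mu at the k-th update time k*Nu (periodic update); mu_0 given.\<close>
primrec mu_seq ::
  "real^'p^'r \<Rightarrow> real^'r \<Rightarrow> nat \<Rightarrow> (nat \<Rightarrow> real^'p^'nx) \<Rightarrow> (nat \<Rightarrow> 'a \<Rightarrow> real^'nx) \<Rightarrow>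
   real^'p \<Rightarrow> real^'nx^'m \<Rightarrow> real^'m \<Rightarrow> nat \<Rightarrow> 'a \<Rightarrow> real^'r" where
  "mu_seq MT mu0 Nu D w thstar Piw piw 0 om = mu0"
| "mu_seq MT mu0 Nu D w thstar Piw piw (Suc k) om =
     (\<chi> i. Sup ((\<lambda>th. MT $ i \<bullet> th) `
        (polyset MT (mu_seq MT mu0 Nu D w thstar Piw piw k om) \<inter>
         (\<Inter>j\<in>{k * Nu + 1 .. Suc k * Nu}. unfalsified D w thstar Piw piw j om))))"

text \<open>Theta_t: updated at t = k*Nu (k >= 1), otherwise Theta_t = Theta_(t-1);
  hence Theta_t = Theta(mu at time (t div Nu)*Nu).\<close>
definition Theta_set ::
  "real^'p^'r \<Rightarrow> real^'r \<Rightarrow> nat \<Rightarrow> (nat \<Rightarrow> real^'p^'nx) \<Rightarrow> (nat \<Rightarrow> 'a \<Rightarrow> real^'nx) \<Rightarrow>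
   real^'p \<Rightarrow> real^'nx^'m \<Rightarrow> real^'m \<Rightarrow> nat \<Rightarrow> 'a \<Rightarrow> (real^'p) set" where
  "Theta_set MT mu0 Nu D w thstar Piw piw t om =
     polyset MT (mu_seq MT mu0 Nu D w thstar Piw piw (t div Nu) om)"

end

theory Submission
  imports Defs
begin

(*
  Fix a row m of M_Theta along which th lies at least eps beyond thstar. Persistent
  excitation makes the Gram matrix of every block k of Nu regressors coercive, so
  G_k y_k = -m has a solution with |y_k| <= 1/beta. If all disturbances of block k fall
  within e = eps beta / (Nu tau) of boundary points of W that are extreme in the
  directions D_j y_k, every parameter unfalsified by the block satisfies
  m (x - thstar) < eps, and the update at the end of the block removes th for good.
  By the tight bound each such event has probability at least p_w(e)^Nu, and the
  events of the t div Nu completed blocks are independent.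
*)

lemma closed_polyset: "closed (polyset A b)"
proof -
  have "polyset A b = (\<Inter>i. {x. A $ i \<bullet> x \<le> b $ i})"
    unfolding polyset_def by auto
  then show ?thesis by (auto intro!: closed_INT closed_halfspace_le)
qed

lemma closed_unfalsified: "closed (unfalsified D w thstar Piw piw t om)"
proof -
  have "isCont (\<lambda>x. A *v x) x" for A :: "real^'p^'nx" and x
    by (rule linear_continuous_at) simp
  then show ?thesis
    unfolding unfalsified_def
    by (intro continuous_closed_vimage[OF closed_polyset, unfolded vimage_def])
       (simp add: matrix_vector_mult_diff_distrib, intro continuous_intros)
qed

lemma sum_matrix_vector_mult:
  "finite J \<Longrightarrow> (\<Sum>j\<in>J. A j) *v x = (\<Sum>j\<in>J. A j *v x)"
  by (induction J rule: finite_induct) (auto simp: matrix_vector_mult_add_rdistrib)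

lemma transpose_mult_self_inner:
  fixes A :: "real^'n^'m"
  shows "((transpose A ** A) *v y) \<bullet> d = (A *v y) \<bullet> (A *v d)"
  by (simp add: matrix_vector_mul_assoc[symmetric] dot_lmul_matrix)

lemma exists_preimage_norm_le_of_coercive:
  fixes G :: "real^'n^'n"
  assumes coercive: "\<And>x. beta * (x \<bullet> x) \<le> x \<bullet> (G *v x)" and "beta > 0"
  shows "\<exists>y. G *v y = z \<and> norm y \<le> norm z / beta"
proof -
  have "x = 0" if "G *v x = 0" for x
    using coercive[of x] that \<open>beta > 0\<close> inner_ge_zero[of x]
    by (simp add: mult_le_0_iff)
  then obtain B where "B ** G = mat 1"
    using matrix_left_invertible_ker by blast
  then have "G ** B = mat 1"
    using matrix_left_right_inverse by blast
  then have Gy: "G *v (B *v z) = z"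
    by (simp add: matrix_vector_mul_assoc)
  define y where "y = B *v z"
  have "beta * norm y * norm y \<le> norm y * norm z"
    using coercive[of y] norm_cauchy_schwarz[of y z] Gy
    by (simp add: y_def dot_square_norm power2_eq_square)
  then have "norm y \<le> norm z / beta"
    using \<open>beta > 0\<close> by (cases "norm y = 0") (simp_all add: field_simps)
  with Gy show ?thesis unfolding y_def by blast
qed

lemma maximizer_in_frontier:
  fixes W :: "'a::real_inner set"
  assumes "closed W" "w0 \<in> W" "v \<noteq> 0" and max: "\<And>u. u \<in> W \<Longrightarrow> v \<bullet> u \<le> v \<bullet> w0"
  shows "w0 \<in> frontier W"
proof -
  have "w0 \<notin> interior W"
  proof
    assume "w0 \<in> interior W"
    then obtain r where "r > 0" "ball w0 r \<subseteq> W"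
      using mem_interior by blast
    define u where "u = w0 + (r / 2 / norm v) *\<^sub>R v"
    have "u \<in> W"
      using \<open>r > 0\<close> \<open>v \<noteq> 0\<close> \<open>ball w0 r \<subseteq> W\<close> by (auto simp: u_def dist_norm)
    moreover have "v \<bullet> u = v \<bullet> w0 + r / 2 * norm v"
      using \<open>v \<noteq> 0\<close> by (simp add: u_def inner_add_right dot_square_norm power2_eq_square)
    ultimately show False
      using max[of u] \<open>r > 0\<close> \<open>v \<noteq> 0\<close> by (simp add: mult_le_0_iff)
  qed
  then show ?thesis
    using assms by (simp add: frontier_def closure_closed)
qed

text \<open>Since \<open>m = - (\<Sum>j\<in>J. D j\<^sup>T D j) y\<close>, the margin \<open>m \<bullet> (x - thstar)\<close> splits into the terms
  \<open>- (D j y) \<bullet> (D j (x - thstar))\<close>; consistency of \<open>x\<close> bounds each by how far \<open>wj j\<close> falls short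
  of the maximizer \<open>wz j\<close> in direction \<open>D j y\<close>, and \<open>m \<noteq> 0\<close> makes at least one bound strict.\<close>
lemma inner_lt_of_near_maximizers:
  fixes D :: "'j \<Rightarrow> real^'p^'n" and wj wz :: "'j \<Rightarrow> real^'n"
  assumes "finite J"
    and gram: "(\<Sum>j\<in>J. transpose (D j) ** D j) *v y = - m" and "m \<noteq> 0"
    and small: "\<And>j. j \<in> J \<Longrightarrow> norm (D j *v y) \<le> c"
    and consistent: "\<And>j. j \<in> J \<Longrightarrow> D j *v (thstar - x) + wj j \<in> W"
    and maximizer: "\<And>j u. j \<in> J \<Longrightarrow> u \<in> W \<Longrightarrow> (D j *v y) \<bullet> u \<le> (D j *v y) \<bullet> wz j"
    and near: "\<And>j. j \<in> J \<Longrightarrow> D j *v y \<noteq> 0 \<Longrightarrow> norm (wj j - wz j) < e"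
  shows "m \<bullet> (x - thstar) < real (card J) * c * e"
proof -
  define v where "v j = D j *v y" for j
  define d where "d = x - thstar"
  have "m \<bullet> d = - (((\<Sum>j\<in>J. transpose (D j) ** D j) *v y) \<bullet> d)"
    using gram by simp
  also have "\<dots> = - (\<Sum>j\<in>J. v j \<bullet> (D j *v d))"
    using \<open>finite J\<close>
    by (simp add: v_def sum_matrix_vector_mult inner_sum_left transpose_mult_self_inner)
  finally have m_d: "m \<bullet> d = (\<Sum>j\<in>J. - (v j \<bullet> (D j *v d)))"
    by (simp add: sum_negf)
  have term_le: "- (v j \<bullet> (D j *v d)) \<le> norm (v j) * norm (wz j - wj j)" if "j \<in> J" for j
  proof -
    have "wj j - D j *v d \<in> W"
      using consistent[OF that]
      by (simp add: d_def matrix_vector_mult_diff_distrib algebra_simps)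
    then have "v j \<bullet> (wj j - D j *v d) \<le> v j \<bullet> wz j"
      using maximizer[OF that] by (simp add: v_def)
    then have "- (v j \<bullet> (D j *v d)) \<le> v j \<bullet> (wz j - wj j)"
      by (simp add: inner_diff_right)
    also have "\<dots> \<le> norm (v j) * norm (wz j - wj j)"
      by (rule norm_cauchy_schwarz)
    finally show ?thesis .
  qed
  have "\<exists>j\<in>J. v j \<noteq> 0"
  proof (rule ccontr)
    assume "\<not> ?thesis"
    then have "(\<Sum>j\<in>J. transpose (D j) ** D j) *v y = 0"
      using \<open>finite J\<close> by (simp add: v_def sum_matrix_vector_mult matrix_vector_mul_assoc[symmetric])
    with gram \<open>m \<noteq> 0\<close> show False by simp
  qed
  then obtain j0 where "j0 \<in> J" "v j0 \<noteq> 0" ..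
  have "0 \<le> norm (wj j0 - wz j0)" "norm (wj j0 - wz j0) < e"
    using near \<open>j0 \<in> J\<close> \<open>v j0 \<noteq> 0\<close> by (simp_all add: v_def)
  then have "e > 0" by linarith
  have term_lt: "- (v j \<bullet> (D j *v d)) < norm (v j) * e" if "j \<in> J" "v j \<noteq> 0" for j
  proof -
    have "norm (wz j - wj j) < e"
      using near that by (simp add: v_def norm_minus_commute)
    then have "norm (v j) * norm (wz j - wj j) < norm (v j) * e"
      using \<open>v j \<noteq> 0\<close> by simp
    with term_le[OF \<open>j \<in> J\<close>] show ?thesis by linarith
  qed
  have "m \<bullet> d < (\<Sum>j\<in>J. norm (v j) * e)"
    unfolding m_d
  proof (rule sum_strict_mono_ex1[OF \<open>finite J\<close>])
    show "\<forall>j\<in>J. - (v j \<bullet> (D j *v d)) \<le> norm (v j) * e"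
    proof
      fix j assume "j \<in> J"
      then show "- (v j \<bullet> (D j *v d)) \<le> norm (v j) * e"
        using term_lt[of j] by (cases "v j = 0") auto
    qed
    show "\<exists>j\<in>J. - (v j \<bullet> (D j *v d)) < norm (v j) * e"
      using term_lt \<open>j0 \<in> J\<close> \<open>v j0 \<noteq> 0\<close> by blast
  qed
  also have "\<dots> \<le> (\<Sum>j\<in>J. c * e)"
    using small \<open>e > 0\<close> by (intro sum_mono mult_right_mono) (simp_all add: v_def)
  finally show ?thesis
    by (simp add: d_def)
qed

lemma exists_block_preimages:
  fixes D :: "nat \<Rightarrow> real^'p^'n"
  assumes PE: "\<forall>t. \<forall>x. x \<bullet> ((\<Sum>j\<in>{t..t + Nu - 1}. transpose (D j) ** D j) *v x) \<ge> beta * (x \<bullet> x)"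
    and "beta > 0" "Nu > 0"
  obtains y where "\<And>k. (\<Sum>j\<in>{k*Nu..<k*Nu + Nu}. transpose (D j) ** D j) *v y k = z"
    and "\<And>k. norm (y k) \<le> norm z / beta"
proof -
  have "\<exists>y. (\<Sum>j\<in>{k*Nu..<k*Nu + Nu}. transpose (D j) ** D j) *v y = z \<and> norm y \<le> norm z / beta" for k
  proof (rule exists_preimage_norm_le_of_coercive[OF _ \<open>beta > 0\<close>])
    have "{k*Nu..<k*Nu + Nu} = {k*Nu..k*Nu + Nu - 1}"
      using \<open>Nu > 0\<close> by auto
    then show "beta * (x \<bullet> x) \<le> x \<bullet> ((\<Sum>j\<in>{k*Nu..<k*Nu + Nu}. transpose (D j) ** D j) *v x)" for x
      using PE by simp
  qed
  then show ?thesis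
    using that by metis
qed

lemma linear_maximizers_exist:
  fixes W :: "'a::real_inner set"
  assumes "compact W" "W \<noteq> {}"
  obtains w0 where "\<And>j. w0 j \<in> W" and "\<And>j u. u \<in> W \<Longrightarrow> v j \<bullet> u \<le> v j \<bullet> w0 j"
proof -
  have "\<exists>x\<in>W. \<forall>u\<in>W. v j \<bullet> u \<le> v j \<bullet> x" for j
    using assms by (intro continuous_attains_sup) (auto intro: continuous_intros)
  then show ?thesis
    using that by metis
qed

lemma (in prob_space) prob_indep_all_in_ge_power:
  assumes indep: "indep_vars (\<lambda>_. borel) w UNIV" and "finite J"
    and A: "\<And>j. j \<in> J \<Longrightarrow> A j \<in> sets borel"
    and p: "\<And>j. j \<in> J \<Longrightarrow> p \<le> prob {\<omega> \<in> space M. w j \<omega> \<in> A j}" and "0 \<le> p"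
  shows "p ^ card J \<le> prob {\<omega> \<in> space M. \<forall>j\<in>J. w j \<omega> \<in> A j}"
proof (cases "J = {}")
  case True
  then show ?thesis by (simp add: prob_space)
next
  case False
  have "{\<omega> \<in> space M. \<forall>j\<in>J. w j \<omega> \<in> A j} = (\<Inter>j\<in>J. w j -` A j \<inter> space M)"
    using False by auto
  also have "prob \<dots> = (\<Prod>j\<in>J. prob (w j -` A j \<inter> space M))"
    using indep False \<open>finite J\<close> A unfolding indep_vars_def2
    by (intro indep_setsD[where I=UNIV]) auto
  finally have "prob {\<omega> \<in> space M. \<forall>j\<in>J. w j \<omega> \<in> A j} = (\<Prod>j\<in>J. prob {\<omega> \<in> space M. w j \<omega> \<in> A j})"
    by (simp add: vimage_def Int_def conj_commute)
  moreover have "(\<Prod>j\<in>J. p) \<le> (\<Prod>j\<in>J. prob {\<omega> \<in> space M. w j \<omega> \<in> A j})"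
    using p \<open>0 \<le> p\<close> by (intro prod_mono) auto
  ultimately show ?thesis by simp
qed

lemma (in prob_space) prob_indep_blocks_all_missed_le:
  assumes indep: "indep_vars (\<lambda>_. borel) w UNIV"
    and disj: "disjoint_family_on B K" and "finite K"
    and B: "\<And>k. k \<in> K \<Longrightarrow> finite (B k)" and card: "\<And>k. k \<in> K \<Longrightarrow> card (B k) = N"
    and A: "\<And>j. A j \<in> sets borel"
    and p: "\<And>j. p \<le> prob {\<omega> \<in> space M. w j \<omega> \<in> A j}" and "0 \<le> p"
  shows "{\<omega> \<in> space M. \<forall>k\<in>K. \<exists>j\<in>B k. w j \<omega> \<notin> A j} \<in> events"
    and "prob {\<omega> \<in> space M. \<forall>k\<in>K. \<exists>j\<in>B k. w j \<omega> \<notin> A j} \<le> (1 - p ^ N) ^ card K"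
proof -
  have rv: "w j \<in> borel_measurable M" for j
    using indep by (simp add: indep_vars_def)
  have ev: "{\<omega> \<in> space M. w j \<omega> \<in> A j} \<in> events" for j
    using measurable_sets_Collect[OF rv, of "\<lambda>x. x \<in> A j"] A by simp
  have block_ev: "{\<omega> \<in> space M. \<forall>j\<in>B k. w j \<omega> \<in> A j} \<in> events" if "k \<in> K" for k
    using ev B[OF that] by (rule sets.sets_Collect_finite_All)
  show "{\<omega> \<in> space M. \<forall>k\<in>K. \<exists>j\<in>B k. w j \<omega> \<notin> A j} \<in> events"
    using ev B \<open>finite K\<close>
    by (intro sets.sets_Collect_finite_All sets.sets_Collect_finite_Ex sets.sets_Collect_neg) auto
  show "prob {\<omega> \<in> space M. \<forall>k\<in>K. \<exists>j\<in>B k. w j \<omega> \<notin> A j} \<le> (1 - p ^ N) ^ card K"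
  proof (cases "K = {}")
    case True
    then show ?thesis by (simp add: prob_space)
  next
    case False
    define Y where "Y k \<omega> = restrict (\<lambda>j. w j \<omega>) (B k)" for k \<omega>
    define C where "C k = space (PiM (B k) (\<lambda>_. borel)) - PiE (B k) A" for k
    have "indep_vars (\<lambda>k. PiM (B k) (\<lambda>_. borel)) Y K"
      unfolding Y_def by (rule indep_vars_restrict[OF indep _ disj]) simp
    then have indY: "indep_sets (\<lambda>k. {Y k -` S \<inter> space M | S. S \<in> sets (PiM (B k) (\<lambda>_. borel))}) K"
      unfolding indep_vars_def2 by blast
    have C: "C k \<in> sets (PiM (B k) (\<lambda>_. borel))" if "k \<in> K" for k
      unfolding C_def using B[OF that] A by (intro sets.Diff sets.top sets_PiM_I_finite) auto
    have miss: "Y k -` C k \<inter> space M = space M - {\<omega> \<in> space M. \<forall>j\<in>B k. w j \<omega> \<in> A j}" for k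
      unfolding C_def Y_def space_PiM by (auto simp: restrict_PiE_iff)
    have "{\<omega> \<in> space M. \<forall>k\<in>K. \<exists>j\<in>B k. w j \<omega> \<notin> A j} = (\<Inter>k\<in>K. Y k -` C k \<inter> space M)"
      unfolding miss using False by auto
    also have "prob \<dots> = (\<Prod>k\<in>K. prob (Y k -` C k \<inter> space M))"
      using False \<open>finite K\<close> C by (intro indep_setsD[OF indY]) auto
    also have "\<dots> = (\<Prod>k\<in>K. prob (space M - {\<omega> \<in> space M. \<forall>j\<in>B k. w j \<omega> \<in> A j}))"
      by (simp only: miss)
    also have "\<dots> \<le> (\<Prod>k\<in>K. 1 - p ^ N)"
    proof (intro prod_mono conjI)
      fix k assume "k \<in> K"
      have "p ^ N \<le> prob {\<omega> \<in> space M. \<forall>j\<in>B k. w j \<omega> \<in> A j}"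
        using prob_indep_all_in_ge_power[OF indep B[OF \<open>k \<in> K\<close>] A p \<open>0 \<le> p\<close>] card[OF \<open>k \<in> K\<close>]
        by simp
      with block_ev[OF \<open>k \<in> K\<close>]
      show "prob (space M - {\<omega> \<in> space M. \<forall>j\<in>B k. w j \<omega> \<in> A j}) \<le> 1 - p ^ N"
        using prob_compl by simp
    qed simp
    finally show ?thesis by simp
  qed
qed

lemma (in prob_space) prob_near_extreme_point_ge:
  fixes X :: "'a \<Rightarrow> 'b::real_inner"
  assumes tight: "\<And>w0 e. w0 \<in> frontier W \<Longrightarrow> e > 0 \<Longrightarrow>
                    p e \<le> prob {\<omega> \<in> space M. norm (X \<omega> - w0) < e}"
    and "closed W" "w0 \<in> W" and max: "\<And>u. u \<in> W \<Longrightarrow> v \<bullet> u \<le> v \<bullet> w0"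
    and "e > 0" "p e \<le> 1"
  shows "p e \<le> prob {\<omega> \<in> space M. X \<omega> \<in> (if v = 0 then UNIV else ball w0 e)}"
proof (cases "v = 0")
  case True
  then show ?thesis
    using \<open>p e \<le> 1\<close> by (simp add: prob_space)
next
  case False
  then have "w0 \<in> frontier W"
    using maximizer_in_frontier[OF \<open>closed W\<close> \<open>w0 \<in> W\<close> _ max] by blast
  with False tight[of w0 e] \<open>e > 0\<close> show ?thesis
    by (simp add: dist_norm norm_minus_commute)
qed

locale periodic_update =
  fixes MT :: "real^'p^'r" and mu0 :: "real^'r" and Nu :: nat
    and D :: "nat \<Rightarrow> real^'p^'nx" and w :: "nat \<Rightarrow> 'a \<Rightarrow> real^'nx"
    and thstar :: "real^'p" and Piw :: "real^'nx^'m" and piw :: "real^'m" and om :: 'a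
  assumes bounded_polyset: "\<And>mu. bounded (polyset MT mu)"
    and thstar_in_init: "thstar \<in> polyset MT mu0"
    and disturbance_in: "\<And>j. w j om \<in> polyset Piw piw"
begin

abbreviation mu :: "nat \<Rightarrow> real^'r" where
  "mu k \<equiv> mu_seq MT mu0 Nu D w thstar Piw piw k om"

definition update_set :: "nat \<Rightarrow> (real^'p) set" where
  "update_set k = polyset MT (mu k) \<inter>
     (\<Inter>j\<in>{k * Nu + 1 .. Suc k * Nu}. unfalsified D w thstar Piw piw j om)"

lemma compact_update_set: "compact (update_set k)"
proof -
  have "closed (update_set k)"
    unfolding update_set_def
    by (intro closed_Int closed_INT ballI closed_polyset closed_unfalsified)
  moreover have "bounded (update_set k)"
    unfolding update_set_def by (rule bounded_subset[OF bounded_polyset]) auto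
  ultimately show ?thesis
    by (simp add: compact_eq_bounded_closed)
qed

lemma thstar_in_update_set: "thstar \<in> polyset MT (mu k) \<Longrightarrow> thstar \<in> update_set k"
  using disturbance_in unfolding update_set_def unfalsified_def by auto

lemma mu_Suc_attained:
  assumes "thstar \<in> polyset MT (mu k)"
  obtains x where "x \<in> update_set k" "mu (Suc k) $ i = MT $ i \<bullet> x"
    and "\<And>x'. x' \<in> update_set k \<Longrightarrow> MT $ i \<bullet> x' \<le> MT $ i \<bullet> x"
proof -
  obtain x where x: "x \<in> update_set k" "\<forall>x'\<in>update_set k. MT $ i \<bullet> x' \<le> MT $ i \<bullet> x"
    using continuous_attains_sup[OF compact_update_set, of k "\<lambda>x. MT $ i \<bullet> x"]
      thstar_in_update_set[OF assms] continuous_on_inner[OF continuous_on_const continuous_on_id]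
    by blast
  then have "Sup ((\<lambda>x. MT $ i \<bullet> x) ` update_set k) = MT $ i \<bullet> x"
    by (intro cSup_eq_maximum) auto
  then have "mu (Suc k) $ i = MT $ i \<bullet> x"
    by (simp add: update_set_def)
  with x that show ?thesis by blast
qed

lemma thstar_in_mu: "thstar \<in> polyset MT (mu k)"
proof (induction k)
  case 0
  then show ?case using thstar_in_init by simp
next
  case (Suc k)
  have "MT $ i \<bullet> thstar \<le> mu (Suc k) $ i" for i
    by (rule mu_Suc_attained[OF Suc, of i]) (use thstar_in_update_set[OF Suc] in auto)
  then show ?case
    unfolding polyset_def by blast
qed

lemma mu_Suc_le: "mu (Suc k) $ i \<le> mu k $ i"
proof -
  obtain x where "x \<in> update_set k" "mu (Suc k) $ i = MT $ i \<bullet> x"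
    using mu_Suc_attained[OF thstar_in_mu] .
  then show ?thesis
    unfolding update_set_def polyset_def by auto
qed

lemma polyset_mu_antimono: "k \<le> n \<Longrightarrow> polyset MT (mu n) \<subseteq> polyset MT (mu k)"
proof -
  have "polyset MT (mu (Suc n)) \<subseteq> polyset MT (mu n)" for n
    unfolding polyset_def using mu_Suc_le order_trans by blast
  then show "k \<le> n \<Longrightarrow> ?thesis"
    by (rule lift_Suc_antimono_le)
qed

lemma Theta_set_excludes_near_block:
  assumes gram: "(\<Sum>j\<in>{k*Nu..<k*Nu + Nu}. transpose (D j) ** D j) *v y k = - MT $ i"
    and "MT $ i \<noteq> 0"
    and small: "\<And>j. norm (D j *v y (j div Nu)) \<le> c"
    and maximizer: "\<And>j u. u \<in> polyset Piw piw \<Longrightarrow>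
                       (D j *v y (j div Nu)) \<bullet> u \<le> (D j *v y (j div Nu)) \<bullet> w0 j"
    and far: "real Nu * c * e \<le> MT $ i \<bullet> (th - thstar)"
    and th: "th \<in> Theta_set MT mu0 Nu D w thstar Piw piw t om" and "k < t div Nu"
  shows "\<exists>j\<in>{k*Nu..<k*Nu + Nu}. D j *v y k \<noteq> 0 \<and> e \<le> norm (w j om - w0 j)"
proof (rule ccontr)
  assume "\<not> ?thesis"
  then have near: "norm (w j om - w0 j) < e"
    if "j \<in> {k*Nu..<k*Nu + Nu}" "D j *v y k \<noteq> 0" for j
    using that by force
  have div_eq: "j div Nu = k" if "j \<in> {k*Nu..<k*Nu + Nu}" for j
    using that by (simp add: div_nat_eqI algebra_simps)
  have "th \<in> polyset MT (mu (Suc k))"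
    using th polyset_mu_antimono \<open>k < t div Nu\<close> unfolding Theta_set_def by (meson Suc_leI subsetD)
  then have th_le: "MT $ i \<bullet> th \<le> mu (Suc k) $ i"
    unfolding polyset_def by blast
  obtain x where x: "x \<in> update_set k" "mu (Suc k) $ i = MT $ i \<bullet> x"
    using mu_Suc_attained[OF thstar_in_mu] .
  have "MT $ i \<bullet> (x - thstar) < real (card {k*Nu..<k*Nu + Nu}) * c * e"
  proof (rule inner_lt_of_near_maximizers[OF _ gram \<open>MT $ i \<noteq> 0\<close> _ _ _ near])
    fix j assume j: "j \<in> {k*Nu..<k*Nu + Nu}"
    show "norm (D j *v y k) \<le> c" "\<And>u. u \<in> polyset Piw piw \<Longrightarrow> (D j *v y k) \<bullet> u \<le> (D j *v y k) \<bullet> w0 j"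
      using small[of j] maximizer[of _ j] div_eq[OF j] by simp_all
    have "Suc j \<in> {k * Nu + 1 .. Suc k * Nu}"
      using j by auto
    then have "x \<in> unfalsified D w thstar Piw piw (Suc j) om"
      using x(1) unfolding update_set_def by blast
    then show "D j *v (thstar - x) + w j om \<in> polyset Piw piw"
      by (simp add: unfalsified_def)
  qed auto
  with x(2) th_le far show False
    by (simp add: inner_diff_right)
qed

end

theorem theorem3:
  fixes M :: "'a measure"
    and thstar :: "real^'p"
    and Piw :: "real^'nx^'m" and piw :: "real^'m"
    and w :: "nat \<Rightarrow> 'a \<Rightarrow> real^'nx"
    and D :: "nat \<Rightarrow> real^'p^'nx"
    and pw :: "real \<Rightarrow> real"
    and tau beta :: real and Nu :: nat
    and MT :: "real^'p^'r" and mu0 :: "real^'r"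
    and eps :: real and th :: "real^'p" and t :: nat
  assumes "prob_space M"
    and W_compact: "compact (polyset Piw piw)"
    and piw_pos: "\<forall>i. piw $ i > 0"
    and w_rv: "\<forall>t. w t \<in> borel_measurable M"
    and w_indep: "prob_space.indep_vars M (\<lambda>_. borel) w UNIV"
    and w_in_W: "\<forall>t. \<forall>om\<in>space M. w t om \<in> polyset Piw piw"
    and pw_range: "\<forall>e>0. 0 < pw e \<and> pw e \<le> 1"
    and tight: "\<forall>w0\<in>frontier (polyset Piw piw). \<forall>e>0. \<forall>t.
                  measure M {om \<in> space M. norm (w t om - w0) < e} \<ge> pw e"
    and tau_pos: "tau > 0" and beta_pos: "beta > 0"
    and Nu_ge: "real Nu \<ge> real_of_int \<lceil>real CARD('p) / real CARD('nx)\<rceil>"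
    and D_bound: "\<forall>t. onorm (\<lambda>x. D t *v x) \<le> tau"
    and PE: "\<forall>t. \<forall>x. x \<bullet> ((\<Sum>j\<in>{t..t + Nu - 1}. transpose (D j) ** D j) *v x)
                      \<ge> beta * (x \<bullet> x)"
    and MT_rows: "\<forall>i. norm (MT $ i) = 1"
    and MT_bdd: "\<forall>mu. bounded (polyset MT mu)"
    and thstar_in: "thstar \<in> polyset MT mu0"
    and eps_pos: "eps > 0"
    and th_in: "th \<in> polyset MT mu0"
    and th_far: "\<exists>i. MT $ i \<bullet> (th - thstar) \<ge> eps"
  shows "measure M {om \<in> space M. th \<in> Theta_set MT mu0 Nu D w thstar Piw piw t om}
           \<le> (1 - (pw (eps * beta / (real Nu * tau))) ^ Nu) ^ (t div Nu)"
proof -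
  interpret P: prob_space M by fact
  let ?W = "polyset Piw piw"
  define e where "e = eps * beta / (real Nu * tau)"
  define blk where "blk k = {k*Nu..<k*Nu + Nu}" for k
  have blk_div: "j div Nu = k" if "j \<in> blk k" for j k
    using that by (simp add: blk_def div_nat_eqI algebra_simps)
  have "0 < real CARD('p) / real CARD('nx)"
    by simp
  then have "Nu > 0"
    using Nu_ge le_of_int_ceiling[of "real CARD('p) / real CARD('nx)"] by linarith
  then have "e > 0"
    using eps_pos beta_pos tau_pos by (simp add: e_def)
  obtain i where far: "eps \<le> MT $ i \<bullet> (th - thstar)"
    using th_far by blast
  have "MT $ i \<noteq> 0"
    using MT_rows by (metis norm_zero zero_neq_one)
  have far': "real Nu * (tau / beta) * e \<le> MT $ i \<bullet> (th - thstar)"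
    using far \<open>Nu > 0\<close> beta_pos tau_pos by (simp add: e_def)
  obtain y where gram: "\<And>k. (\<Sum>j\<in>blk k. transpose (D j) ** D j) *v y k = - MT $ i"
    and "\<And>k. norm (y k) \<le> norm (- MT $ i) / beta"
    unfolding blk_def by (rule exists_block_preimages[OF PE beta_pos \<open>Nu > 0\<close>, of "- MT $ i"]) blast
  then have norm_y: "norm (y k) \<le> 1 / beta" for k
    using MT_rows by simp
  have norm_Dy: "norm (D j *v y (j div Nu)) \<le> tau / beta" for j
  proof -
    have "norm (D j *v y (j div Nu)) \<le> onorm (\<lambda>x. D j *v x) * norm (y (j div Nu))"
      by (rule onorm) simp
    also have "\<dots> \<le> tau * (1 / beta)"
      using D_bound norm_y tau_pos by (intro mult_mono) (auto intro: onorm_pos_le)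
    finally show ?thesis by simp
  qed
  have "0 \<in> ?W"
    using piw_pos by (simp add: polyset_def less_imp_le)
  then have "?W \<noteq> {}" by blast
  obtain w0 where w0_in: "\<And>j. w0 j \<in> ?W"
    and w0_max: "\<And>j u. u \<in> ?W \<Longrightarrow> (D j *v y (j div Nu)) \<bullet> u \<le> (D j *v y (j div Nu)) \<bullet> w0 j"
    by (rule linear_maximizers_exist[OF W_compact \<open>?W \<noteq> {}\<close>, where v = "\<lambda>j. D j *v y (j div Nu)"])
      blast
  define A where "A j = (if D j *v y (j div Nu) = 0 then UNIV else ball (w0 j) e)" for j
  have pw_A: "pw e \<le> P.prob {om \<in> space M. w j om \<in> A j}" for j
    unfolding A_def using tight pw_range \<open>e > 0\<close>
    by (intro P.prob_near_extreme_point_ge[OF _ compact_imp_closed[OF W_compact] w0_in w0_max]) auto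
  have excluded: "{om \<in> space M. th \<in> Theta_set MT mu0 Nu D w thstar Piw piw t om}
      \<subseteq> {om \<in> space M. \<forall>k\<in>{..<t div Nu}. \<exists>j\<in>blk k. w j om \<notin> A j}"
  proof -
    have "\<exists>j\<in>blk k. w j om \<notin> A j"
      if om: "om \<in> space M" and th: "th \<in> Theta_set MT mu0 Nu D w thstar Piw piw t om"
        and k: "k < t div Nu" for om k
    proof -
      interpret periodic_update MT mu0 Nu D w thstar Piw piw om
        using MT_bdd thstar_in w_in_W om by unfold_locales auto
      obtain j where "j \<in> blk k" "D j *v y k \<noteq> 0" "e \<le> norm (w j om - w0 j)"
        using Theta_set_excludes_near_block[OF gram[of k, unfolded blk_def] \<open>MT $ i \<noteq> 0\<close>
            norm_Dy w0_max far' th k] unfolding blk_def by blast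
      then show ?thesis
        using blk_div by (auto simp: A_def dist_norm norm_minus_commute)
    qed
    then show ?thesis by auto
  qed
  have disj: "disjoint_family_on blk {..<t div Nu}"
    using blk_div by (auto simp: disjoint_family_on_def)
  have blk: "finite (blk k)" "card (blk k) = Nu" for k
    by (simp_all add: blk_def)
  have A_borel: "A j \<in> sets borel" for j
    by (simp add: A_def)
  have "0 \<le> pw e"
    using pw_range \<open>e > 0\<close> by (simp add: less_imp_le)
  note missed = P.prob_indep_blocks_all_missed_le[OF w_indep disj finite_lessThan blk A_borel pw_A this]
  show ?thesis
    using order_trans[OF P.finite_measure_mono[OF excluded missed(1)] missed(2)] by (simp add: e_def)
qed

end
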